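(* Let $G$ be a digraph. (a) Every allowed elementary path $\alpha$ in $G$ can be written as a concatenation $$\alpha=\beta_1*\gamma_1*\beta_2*\gamma_2*\cdots*\beta_{k-1}*\gamma_{k-1}*\beta_k$$ of simplicial allowed elementary paths $\beta_i$ (each $\beta_i$ possibly a single vertex) and directed loops $\gamma_i$; this decomposition is uniquely determined by the following algorithm: writing $\alpha=v_0\cdots v_n$, if all $v_i$ are distinct put $\alpha=\beta_1$; otherwise let $i_1$ be the smallest index such that $v_{i_1}=v_{j_1}$ for some $j_1<i_1$, put $\beta_1=v_0\cdots v_{j_1}$, $\gamma_1=v_{j_1}v_{j_1+1}\cdots v_{i_1}$, and apply the same procedure to $v_{i_1}v_{i_1+1}\cdots v_n$. (b) If $f$ is a discrete Morse function on $G$ and $\alpha$ is non-critical, then in the decomposition of (a) some $\beta_i$ is non-critical.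
   Context: A digraph $G=(V,E)$ consists of a set $V$ and $E\subseteq(V\times V)\setminus\{(v,v)\}$; $(u,v)\in E$ is written $u\to v$. An allowed elementary $n$-path is a sequence $v_0\cdots v_n$ of vertices with $v_{i-1}\to v_i\in E$ for $1\le i\le n$; it is simplicial if all its vertices are distinct. A directed loop is an allowed elementary path $v_0v_1\cdots v_nv_0$ with $n\ge1$. The concatenation of $v_0\cdots v_p$ and $w_0\cdots w_q$ is $v_0\cdots v_pw_1\cdots w_q$ if $v_p=w_0$ (and $0$ otherwise). For allowed elementary paths, $\gamma'<\gamma$ (or $\gamma>\gamma'$) means $\gamma'$ is obtained from $\gamma$ by deleting some entries. A map $f:V\to[0,+\infty)$ is a discrete Morse function on $G$ if for every allowed elementary path $v_0\cdots v_n$: (i) there is at most one index $i$ with $f(v_i)=0$ such that $v_0\cdots v_{i-1}v_{i+1}\cdots v_n$ is an allowed elementary $(n-1)$-path; (ii) there is at most one vertex $u$ with $f(u)=0$ such that for some $-1\le j\le n$ the sequence $v_0\cdots v_juv_{j+1}\cdots v_n$ (meaning $uv_0\cdots v_n$ if $j=-1$, $v_0\cdots v_nu$ if $j=n$) is an allowed elementary $(n+1)$-path. Set $f(v_0\cdots v_n)=\sum_if(v_i)$. An allowed elementary $n$-path $\gamma$ is critical if there is no allowed elementary $(n-1)$-path $\beta<\gamma$ with $f(\beta)=f(\gamma)$ and no allowed elementary $(n+1)$-path $\alpha>\gamma$ with $f(\alpha)=f(\gamma)$; otherwise it is non-critical. *)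

theory Defs
  imports Complex_Main "HOL-Library.Sublist"
begin

text \<open>A digraph: vertex set V, edge set E \<subseteq> V \<times> V without self-loops.
  An elementary n-path v0...vn is represented by the nonempty list [v0,...,vn].\<close>

definition digraph :: "'a set \<Rightarrow> ('a \<times> 'a) set \<Rightarrow> bool" where
  "digraph V E \<longleftrightarrow> E \<subseteq> V \<times> V \<and> (\<forall>v. (v, v) \<notin> E)"

definition allowed_path :: "'a set \<Rightarrow> ('a \<times> 'a) set \<Rightarrow> 'a list \<Rightarrow> bool" where
  "allowed_path V E p \<longleftrightarrow> p \<noteq> [] \<and> set p \<subseteq> V \<and>
     (\<forall>i. Suc i < length p \<longrightarrow> (p ! i, p ! Suc i) \<in> E)"

definition simplicial_path :: "'a set \<Rightarrow> ('a \<times> 'a) set \<Rightarrow> 'a list \<Rightarrow> bool" where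
  "simplicial_path V E p \<longleftrightarrow> allowed_path V E p \<and> distinct p"

definition directed_loop :: "'a set \<Rightarrow> ('a \<times> 'a) set \<Rightarrow> 'a list \<Rightarrow> bool" where
  "directed_loop V E p \<longleftrightarrow> allowed_path V E p \<and> length p \<ge> 3 \<and> hd p = last p"

text \<open>Concatenation of paths (the empty list plays the role of 0).\<close>
definition pcat :: "'a list \<Rightarrow> 'a list \<Rightarrow> 'a list" where
  "pcat p q = (if p \<noteq> [] \<and> q \<noteq> [] \<and> last p = hd q then p @ tl q else [])"

fun assemble :: "'a list list \<Rightarrow> 'a list list \<Rightarrow> 'a list" where
  "assemble [b] [] = b"
| "assemble (b # bs) (g # gs) = pcat (pcat b g) (assemble bs gs)"
| "assemble _ _ = []"

definition first_rep :: "'a list \<Rightarrow> nat" where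
  "first_rep vs = (LEAST i. i < length vs \<and> vs ! i \<in> set (take i vs))"

lemma first_rep_props:
  assumes "\<not> distinct vs"
  shows "0 < first_rep vs \<and> first_rep vs < length vs"
proof -
  obtain i j where ij: "j < i" "i < length vs" "vs ! i = vs ! j"
    using assms by (metis distinct_conv_nth linorder_neqE_nat)
  have ex: "i < length vs \<and> vs ! i \<in> set (take i vs)"
    using ij by (metis in_set_conv_nth length_take min.absorb4 nth_take order.strict_trans)
  then have P: "first_rep vs < length vs \<and> vs ! first_rep vs \<in> set (take (first_rep vs) vs)"
    unfolding first_rep_def by (rule LeastI)
  then have "first_rep vs \<noteq> 0" by (metis empty_iff list.set(1) take0)
  with P show ?thesis by simp
qed

function decomp :: "'a list \<Rightarrow> 'a list list \<times> 'a list list" where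
  "decomp vs =
     (if distinct vs then ([vs], [])
      else (let i = first_rep vs;
                j = (LEAST j. vs ! j = vs ! i);
                r = decomp (drop i vs)
            in (take (Suc j) vs # fst r, drop j (take (Suc i) vs) # snd r)))"
  by pat_completeness auto
termination
  by (relation "measure length") (auto dest: first_rep_props)

definition morse_function :: "'a set \<Rightarrow> ('a \<times> 'a) set \<Rightarrow> ('a \<Rightarrow> real) \<Rightarrow> bool" where
  "morse_function V E f \<longleftrightarrow> (\<forall>v\<in>V. f v \<ge> 0) \<and>
    (\<forall>p. allowed_path V E p \<longrightarrow>
       (\<forall>i i'. (i < length p \<and> f (p ! i) = 0 \<and> allowed_path V E (take i p @ drop (Suc i) p)) \<longrightarrow>
              (i' < length p \<and> f (p ! i') = 0 \<and> allowed_path V E (take i' p @ drop (Suc i') p)) \<longrightarrow>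
              i = i') \<and>
       (\<forall>u u'. (u \<in> V \<and> f u = 0 \<and> (\<exists>j \<le> length p. allowed_path V E (take j p @ u # drop j p))) \<longrightarrow>
              (u' \<in> V \<and> f u' = 0 \<and> (\<exists>j \<le> length p. allowed_path V E (take j p @ u' # drop j p))) \<longrightarrow>
              u = u'))"

definition path_value :: "('a \<Rightarrow> real) \<Rightarrow> 'a list \<Rightarrow> real" where
  "path_value f p = sum_list (map f p)"

definition critical :: "'a set \<Rightarrow> ('a \<times> 'a) set \<Rightarrow> ('a \<Rightarrow> real) \<Rightarrow> 'a list \<Rightarrow> bool" where
  "critical V E f g \<longleftrightarrow>
     \<not> (\<exists>b. allowed_path V E b \<and> Suc (length b) = length g \<and> subseq b g \<and> path_value f b = path_value f g) \<and>
     \<not> (\<exists>a. allowed_path V E a \<and> length a = Suc (length g) \<and> subseq g a \<and> path_value f a = path_value f g)"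

end

theory Submission
  imports Defs
begin

text \<open>The algorithm cuts \<open>\<alpha>\<close> at its first repeated vertex: \<open>\<alpha> = pre x mid x post\<close> with
  \<open>pre x mid\<close> repetition-free, which yields \<open>\<beta>\<^sub>1 = pre x\<close>, the directed loop
  \<open>\<gamma>\<^sub>1 = x mid x\<close>, and a recursive call on \<open>x post\<close>.

  For (b), the point is that a discrete Morse function vanishes nowhere on a directed loop:
  rotating the loop so that it starts and ends at a vertex \<open>z\<close> with \<open>f z = 0\<close>, deleting either
  copy of \<open>z\<close> leaves an allowed path, against the uniqueness in condition (i). A non-critical
  \<open>\<alpha>\<close> admits the deletion or insertion of a vertex of value \<open>0\<close> leaving an allowed path. That
  vertex cannot sit on (or be inserted into) the loop \<open>x mid x\<close>, so the same deletion or
  insertion already works inside \<open>pre x\<close> or inside \<open>x post\<close>, and induction finishes.\<close>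

declare decomp.simps [simp del]

lemma not_in_set_take_nth:
  assumes "distinct xs" "k < length xs"
  shows "xs ! k \<notin> set (take k xs)"
  using assms id_take_nth_drop[OF assms(2)] distinct_append
  by (metis disjoint_iff list.set_intros(1))

lemma ex_first_repetition:
  "\<not> distinct \<alpha> \<Longrightarrow> \<exists>pre x mid post. \<alpha> = pre @ x # mid @ x # post \<and> distinct (pre @ x # mid)"
proof (induction \<alpha> rule: rev_induct)
  case (snoc z \<alpha>)
  show ?case
  proof (cases "distinct \<alpha>")
    case True
    then have "z \<in> set \<alpha>" using snoc.prems by simp
    then obtain pre mid where "\<alpha> = pre @ z # mid" by (meson split_list)
    with True show ?thesis by (intro exI[of _ pre] exI[of _ z] exI[of _ mid] exI[of _ "[]"]) simp
  next
    case False
    then obtain pre x mid post where "\<alpha> = pre @ x # mid @ x # post" "distinct (pre @ x # mid)"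
      using snoc.IH by blast
    then show ?thesis by (intro exI[of _ pre] exI[of _ x] exI[of _ mid] exI[of _ "post @ [z]"]) simp
  qed
qed simp

lemma append_eq_append3D:
  assumes "xs @ ys = A @ B @ C"
  shows "(\<exists>zs. A = xs @ zs \<and> ys = zs @ B @ C) \<or> (\<exists>zs. C = zs @ ys \<and> xs = A @ B @ zs)
     \<or> (\<exists>B1 B2. B = B1 @ B2 \<and> B1 \<noteq> [] \<and> B2 \<noteq> [] \<and> xs = A @ B1 \<and> ys = B2 @ C)"
proof -
  obtain us where "(xs = A @ us \<and> us @ ys = B @ C) \<or> (xs @ us = A \<and> ys = us @ B @ C)"
    using assms append_eq_append_conv2 by metis
  moreover have ?thesis if "xs = A @ us" "us @ ys = B @ C"
  proof -
    obtain vs where "(us = B @ vs \<and> vs @ ys = C) \<or> (us @ vs = B \<and> ys = vs @ C)"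
      using \<open>us @ ys = B @ C\<close> append_eq_append_conv2 by metis
    then show ?thesis
      using that by (cases "us = []"; cases "vs = []") auto
  qed
  ultimately show ?thesis by blast
qed

lemma append_Cons_eq_append3D:
  assumes "xs @ y # ys = A @ B @ C" "y \<notin> set B"
  shows "(\<exists>zs. A = xs @ y # zs \<and> ys = zs @ B @ C) \<or> (\<exists>zs. C = zs @ y # ys \<and> xs = A @ B @ zs)"
  using append_eq_append3D[OF assms(1)]
proof (elim disjE exE conjE)
  fix zs assume "A = xs @ zs" "y # ys = zs @ B @ C"
  then show ?thesis using assms(2) by (cases zs; cases B) auto
next
  fix B1 B2 assume "B = B1 @ B2" "B2 \<noteq> []" "y # ys = B2 @ C"
  then show ?thesis using assms(2) by (cases B2) auto
qed auto

lemma subseq_length_Suc_delete: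
  "subseq b a \<Longrightarrow> length a = Suc (length b) \<Longrightarrow> \<exists>xs y ys. a = xs @ y # ys \<and> b = xs @ ys"
proof (induction rule: list_emb.induct)
  case (list_emb_Nil a)
  then show ?case by (cases a) auto
next
  case (list_emb_Cons b a y)
  then have "b = a" by (simp add: subseq_same_length)
  then show ?case by (intro exI[of _ "[]"]) simp
next
  case (list_emb_Cons2 x y b a)
  then obtain xs z ys where "a = xs @ z # ys" "b = xs @ ys" by auto
  with list_emb_Cons2.hyps(1) show ?case by (intro exI[of _ "x # xs"]) simp
qed

lemma subseq_delete: "subseq (xs @ ys) (xs @ y # ys)"
  by (simp add: subseq_append' list_emb_Cons)

lemma decomp_distinct: "distinct \<alpha> \<Longrightarrow> decomp \<alpha> = ([\<alpha>], [])"
  by (subst decomp.simps) simp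

lemma decomp_first_repetition:
  assumes "distinct (pre @ x # mid)"
  shows "decomp (pre @ x # mid @ x # post) =
    ((pre @ [x]) # fst (decomp (x # post)), (x # mid @ [x]) # snd (decomp (x # post)))"
proof -
  define l where "l = pre @ x # mid"
  let ?\<alpha> = "l @ x # post"
  have "first_rep ?\<alpha> = length l"
    unfolding first_rep_def
  proof (rule Least_equality)
    have "x \<in> set l" by (simp add: l_def)
    then show "length l < length ?\<alpha> \<and> ?\<alpha> ! length l \<in> set (take (length l) ?\<alpha>)"
      by simp
    show "length l \<le> k" if "k < length ?\<alpha> \<and> ?\<alpha> ! k \<in> set (take k ?\<alpha>)" for k
      using that not_in_set_take_nth[OF assms[folded l_def], of k]
      by (cases "k < length l") (simp_all add: nth_append)
  qed
  moreover have "(LEAST j. ?\<alpha> ! j = ?\<alpha> ! length l) = length pre"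
  proof (rule Least_equality)
    show "?\<alpha> ! length pre = ?\<alpha> ! length l" by (simp add: l_def nth_append)
    show "length pre \<le> j" if "?\<alpha> ! j = ?\<alpha> ! length l" for j
      using that assms by (cases "j < length pre") (auto simp: l_def nth_append)
  qed
  moreover have "\<not> distinct ?\<alpha>" by (simp add: l_def)
  ultimately show ?thesis
    by (subst decomp.simps) (simp add: Let_def l_def)
qed

lemma decomp_induct [case_names distinct first_repetition]:
  assumes "\<And>\<alpha>. distinct \<alpha> \<Longrightarrow> P \<alpha>"
    and "\<And>pre x mid post. distinct (pre @ x # mid) \<Longrightarrow> P (x # post) \<Longrightarrow> P (pre @ x # mid @ x # post)"
  shows "P \<alpha>"
proof (induction "length \<alpha>" arbitrary: \<alpha> rule: less_induct)
  case less
  show ?case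
  proof (cases "distinct \<alpha>")
    case False
    then obtain pre x mid post where "\<alpha> = pre @ x # mid @ x # post" "distinct (pre @ x # mid)"
      using ex_first_repetition by blast
    then show ?thesis using assms(2) less by simp
  qed (rule assms(1))
qed

lemma length_decomp: "length (fst (decomp \<alpha>)) = Suc (length (snd (decomp \<alpha>)))"
  by (induction \<alpha> rule: decomp_induct) (simp_all add: decomp_distinct decomp_first_repetition)

lemma assemble_decomp: "assemble (fst (decomp \<alpha>)) (snd (decomp \<alpha>)) = \<alpha>"
  by (induction \<alpha> rule: decomp_induct) (simp_all add: decomp_distinct decomp_first_repetition pcat_def)

lemma allowed_path_iff_successively:
  "allowed_path V E p \<longleftrightarrow> p \<noteq> [] \<and> set p \<subseteq> V \<and> successively (\<lambda>x y. (x, y) \<in> E) p"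
  unfolding allowed_path_def successively_conv_nth by auto

lemma allowed_path_append_Cons_iff:
  "allowed_path V E (p @ v # q) \<longleftrightarrow> allowed_path V E (p @ [v]) \<and> allowed_path V E (v # q)"
  by (induction p) (auto simp: allowed_path_iff_successively successively_Cons hd_append)

lemma allowed_path_infix: "allowed_path V E (p @ q @ r) \<Longrightarrow> q \<noteq> [] \<Longrightarrow> allowed_path V E q"
  by (auto simp: allowed_path_iff_successively successively_append_iff)

lemma allowed_path_prefix: "allowed_path V E (q @ r) \<Longrightarrow> q \<noteq> [] \<Longrightarrow> allowed_path V E q"
  using allowed_path_infix[of V E "[]"] by simp

lemma allowed_path_suffix: "allowed_path V E (p @ q) \<Longrightarrow> q \<noteq> [] \<Longrightarrow> allowed_path V E q"
  using allowed_path_infix[of V E p q "[]"] by simp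

lemma decomp_simplicial_path:
  "allowed_path V E \<alpha> \<Longrightarrow> b \<in> set (fst (decomp \<alpha>)) \<Longrightarrow> simplicial_path V E b"
proof (induction \<alpha> rule: decomp_induct)
  case (distinct \<alpha>)
  then show ?case by (simp add: decomp_distinct simplicial_path_def)
next
  case (first_repetition pre x mid post)
  have "allowed_path V E (pre @ [x])" "allowed_path V E (x # post)"
    using first_repetition.prems(1) allowed_path_prefix[of V E "pre @ [x]"]
      allowed_path_suffix[of V E "pre @ x # mid"]
    by simp_all
  with first_repetition show ?case
    by (auto simp: decomp_first_repetition simplicial_path_def)
qed

lemma decomp_directed_loop:
  assumes "digraph V E"
  shows "allowed_path V E \<alpha> \<Longrightarrow> g \<in> set (snd (decomp \<alpha>)) \<Longrightarrow> directed_loop V E g"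
proof (induction \<alpha> rule: decomp_induct)
  case (distinct \<alpha>)
  then show ?case by (simp add: decomp_distinct)
next
  case (first_repetition pre x mid post)
  have loop: "allowed_path V E (x # mid @ [x])"
    using first_repetition.prems(1) allowed_path_infix[of V E pre "x # mid @ [x]"] by simp
  moreover have "mid \<noteq> []"
    using loop assms by (auto simp: allowed_path_def digraph_def)
  moreover have "allowed_path V E (x # post)"
    using first_repetition.prems(1) allowed_path_suffix[of V E "pre @ x # mid"] by simp
  ultimately show ?case
    using first_repetition by (auto simp: decomp_first_repetition directed_loop_def Suc_le_eq)
qed

lemma not_critical_by_deletion:
  assumes "allowed_path V E (xs @ ys)" "f y = 0"
  shows "\<not> critical V E f (xs @ y # ys)"
proof -
  have "Suc (length (xs @ ys)) = length (xs @ y # ys)"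
    and "path_value f (xs @ ys) = path_value f (xs @ y # ys)"
    using assms(2) by (simp_all add: path_value_def)
  then show ?thesis
    using assms(1) subseq_delete unfolding critical_def by metis
qed

lemma not_critical_by_insertion:
  assumes "allowed_path V E (xs @ u # ys)" "f u = 0"
  shows "\<not> critical V E f (xs @ ys)"
proof -
  have "length (xs @ u # ys) = Suc (length (xs @ ys))"
    and "path_value f (xs @ u # ys) = path_value f (xs @ ys)"
    using assms(2) by (simp_all add: path_value_def)
  then show ?thesis
    using assms(1) subseq_delete unfolding critical_def by metis
qed

lemma not_critical_iff:
  "\<not> critical V E f g \<longleftrightarrow>
     (\<exists>xs y ys. g = xs @ y # ys \<and> f y = 0 \<and> allowed_path V E (xs @ ys)) \<or>
     (\<exists>xs u ys. g = xs @ ys \<and> f u = 0 \<and> allowed_path V E (xs @ u # ys))"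
proof
  assume "\<not> critical V E f g"
  then consider (deletion) b where "allowed_path V E b" "Suc (length b) = length g" "subseq b g"
      "path_value f b = path_value f g"
    | (insertion) a where "allowed_path V E a" "length a = Suc (length g)" "subseq g a"
      "path_value f a = path_value f g"
    unfolding critical_def by blast
  then show "(\<exists>xs y ys. g = xs @ y # ys \<and> f y = 0 \<and> allowed_path V E (xs @ ys)) \<or>
     (\<exists>xs u ys. g = xs @ ys \<and> f u = 0 \<and> allowed_path V E (xs @ u # ys))"
  proof cases
    case deletion
    then obtain xs y ys where "g = xs @ y # ys" "b = xs @ ys"
      using subseq_length_Suc_delete by metis
    with deletion show ?thesis by (auto simp: path_value_def)
  next
    case insertion
    then obtain xs u ys where "a = xs @ u # ys" "g = xs @ ys"
      using subseq_length_Suc_delete by metis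
    with insertion show ?thesis by (auto simp: path_value_def)
  qed
qed (elim disjE exE conjE; simp add: not_critical_by_deletion not_critical_by_insertion)

lemma morse_function_deletion_unique:
  assumes "morse_function V E f" "allowed_path V E p"
    "i < length p" "f (p ! i) = 0" "allowed_path V E (take i p @ drop (Suc i) p)"
    "i' < length p" "f (p ! i') = 0" "allowed_path V E (take i' p @ drop (Suc i') p)"
  shows "i = i'"
  using assms unfolding morse_function_def by blast

lemma morse_closed_path_start_nonzero:
  assumes "morse_function V E f" and closed: "allowed_path V E (z # r @ [z])"
  shows "f z \<noteq> 0"
proof
  assume "f z = 0"
  let ?p = "z # r @ [z]"
  have "allowed_path V E (take 0 ?p @ drop (Suc 0) ?p)"
    using allowed_path_suffix[of V E "[z]" "r @ [z]"] closed by simp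
  moreover have "allowed_path V E (take (Suc (length r)) ?p @ drop (Suc (Suc (length r))) ?p)"
    using allowed_path_prefix[of V E "z # r" "[z]"] closed by simp
  ultimately have "0 = Suc (length r)"
    using \<open>f z = 0\<close> by (intro morse_function_deletion_unique[OF assms]) (simp_all add: nth_append)
  then show False by simp
qed

lemma allowed_closed_path_rotate:
  assumes closed: "allowed_path V E (h # m @ [h])" and z: "z \<in> set m"
  obtains r where "allowed_path V E (z # r @ [z])"
proof -
  obtain m1 m2 where m: "m = m1 @ z # m2" using z by (meson split_list)
  have "allowed_path V E (h # m1 @ [z])" "allowed_path V E (z # m2 @ [h])"
    using closed allowed_path_append_Cons_iff[of V E "h # m1" z "m2 @ [h]"] by (simp_all add: m)
  then have "allowed_path V E ((z # m2) @ h # (m1 @ [z]))"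
    using allowed_path_append_Cons_iff by fastforce
  then show ?thesis using that[of "m2 @ h # m1"] by simp
qed

lemma morse_closed_path_nonzero:
  assumes "morse_function V E f" "allowed_path V E (h # m @ [h])" "z \<in> set (h # m @ [h])"
  shows "f z \<noteq> 0"
proof -
  consider "z = h" | "z \<in> set m" using assms(3) by auto
  then show ?thesis
  proof cases
    case 1
    then show ?thesis using assms(1,2) morse_closed_path_start_nonzero by metis
  next
    case 2
    then obtain r where "allowed_path V E (z # r @ [z])"
      using assms(2) allowed_closed_path_rotate by metis
    then show ?thesis using assms(1) morse_closed_path_start_nonzero by metis
  qed
qed

lemma not_critical_prefix_or_suffix_by_deletion:
  assumes "pre @ x # mid @ x # post = xs @ y # ys" "f y = 0" "allowed_path V E (xs @ ys)"
    and off_loop: "y \<notin> set (x # mid @ [x])"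
  shows "\<not> critical V E f (pre @ [x]) \<or> \<not> critical V E f (x # post)"
proof -
  let ?L = "x # mid @ [x]"
  from append_Cons_eq_append3D[of xs y ys pre ?L post] assms(1) off_loop consider
      (in_pre) zs where "pre = xs @ y # zs" "ys = zs @ ?L @ post"
    | (in_post) zs where "post = zs @ y # ys" "xs = pre @ ?L @ zs"
    by auto
  then show ?thesis
  proof cases
    case in_pre
    then have "allowed_path V E (xs @ zs @ [x])"
      using assms(3) allowed_path_prefix[of V E "xs @ zs @ [x]"] by simp
    then show ?thesis
      using in_pre assms(2) not_critical_by_deletion[of V E xs "zs @ [x]" f y] by simp
  next
    case in_post
    then have "allowed_path V E (x # zs @ ys)"
      using assms(3) allowed_path_suffix[of V E "pre @ x # mid" "x # zs @ ys"] by simp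
    then show ?thesis
      using in_post assms(2) not_critical_by_deletion[of V E "x # zs" ys f y] by simp
  qed
qed

lemma not_critical_prefix_or_suffix_by_insertion:
  assumes morse: "morse_function V E f"
    and "pre @ x # mid @ x # post = xs @ ys" "f u = 0" "allowed_path V E (xs @ u # ys)"
  shows "\<not> critical V E f (pre @ [x]) \<or> \<not> critical V E f (x # post)"
proof -
  let ?L = "x # mid @ [x]"
  from append_eq_append3D[of xs ys pre ?L post] assms(2) consider
      (in_pre) zs where "pre = xs @ zs" "ys = zs @ ?L @ post"
    | (in_post) zs where "post = zs @ ys" "xs = pre @ ?L @ zs"
    | (in_loop) L1 L2 where "?L = L1 @ L2" "L1 \<noteq> []" "L2 \<noteq> []" "xs = pre @ L1" "ys = L2 @ post"
    by auto
  then show ?thesis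
  proof cases
    case in_pre
    then have "allowed_path V E (xs @ u # zs @ [x])"
      using assms(4) allowed_path_prefix[of V E "xs @ u # zs @ [x]"] by simp
    then show ?thesis
      using in_pre assms(3) not_critical_by_insertion[of V E xs u "zs @ [x]" f] by simp
  next
    case in_post
    then have "allowed_path V E (x # zs @ u # ys)"
      using assms(4) allowed_path_suffix[of V E "pre @ x # mid" "x # zs @ u # ys"] by simp
    then show ?thesis
      using in_post assms(3) not_critical_by_insertion[of V E "x # zs" u ys f] by simp
  next
    case in_loop
    then have "L1 @ u # L2 = x # (tl L1 @ u # butlast L2) @ [x]"
      by (cases L1; cases L2 rule: rev_cases) auto
    moreover have "allowed_path V E (L1 @ u # L2)"
      using assms(4) in_loop allowed_path_infix[of V E pre "L1 @ u # L2" post] by simp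
    ultimately have "f u \<noteq> 0"
      using morse_closed_path_nonzero[OF morse] by (metis in_set_conv_decomp)
    then show ?thesis using assms(3) by contradiction
  qed
qed

lemma not_critical_prefix_or_suffix:
  assumes morse: "morse_function V E f" and allowed: "allowed_path V E (pre @ x # mid @ x # post)"
    and "\<not> critical V E f (pre @ x # mid @ x # post)"
  shows "\<not> critical V E f (pre @ [x]) \<or> \<not> critical V E f (x # post)"
proof -
  have loop: "allowed_path V E (x # mid @ [x])"
    using allowed allowed_path_infix[of V E pre "x # mid @ [x]" post] by simp
  from assms(3) consider
      (deletion) xs y ys where "pre @ x # mid @ x # post = xs @ y # ys" "f y = 0"
        "allowed_path V E (xs @ ys)"
    | (insertion) xs u ys where "pre @ x # mid @ x # post = xs @ ys" "f u = 0"
        "allowed_path V E (xs @ u # ys)"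
    unfolding not_critical_iff by blast
  then show ?thesis
  proof cases
    case deletion
    moreover have "y \<notin> set (x # mid @ [x])"
      using morse_closed_path_nonzero[OF morse loop] deletion(2) by blast
    ultimately show ?thesis by (rule not_critical_prefix_or_suffix_by_deletion)
  next
    case insertion
    with morse show ?thesis by (rule not_critical_prefix_or_suffix_by_insertion)
  qed
qed

lemma decomp_not_critical:
  assumes "morse_function V E f"
  shows "allowed_path V E \<alpha> \<Longrightarrow> \<not> critical V E f \<alpha> \<Longrightarrow>
    \<exists>b \<in> set (fst (decomp \<alpha>)). \<not> critical V E f b"
proof (induction \<alpha> rule: decomp_induct)
  case (distinct \<alpha>)
  then show ?case by (simp add: decomp_distinct)
next
  case (first_repetition pre x mid post)
  have "allowed_path V E (x # post)"
    using first_repetition.prems(1) allowed_path_suffix[of V E "pre @ x # mid"] by simp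
  with first_repetition not_critical_prefix_or_suffix[OF assms] show ?case
    by (auto simp: decomp_first_repetition)
qed

theorem lemma4p5:
  fixes V :: "'a set" and E :: "('a \<times> 'a) set" and f :: "'a \<Rightarrow> real" and \<alpha> :: "'a list"
  assumes "digraph V E" and "allowed_path V E \<alpha>"
  shows "length (fst (decomp \<alpha>)) = Suc (length (snd (decomp \<alpha>)))
       \<and> (\<forall>b \<in> set (fst (decomp \<alpha>)). simplicial_path V E b)
       \<and> (\<forall>g \<in> set (snd (decomp \<alpha>)). directed_loop V E g)
       \<and> assemble (fst (decomp \<alpha>)) (snd (decomp \<alpha>)) = \<alpha>
       \<and> (morse_function V E f \<and> \<not> critical V E f \<alpha> \<longrightarrow>
            (\<exists>b \<in> set (fst (decomp \<alpha>)). \<not> critical V E f b))"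
  using length_decomp assemble_decomp decomp_simplicial_path[OF assms(2)]
    decomp_directed_loop[OF assms] decomp_not_critical[OF _ assms(2)]
  by blast

end
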